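(* Let $n\ge 2$, $I=\{1,\dots,n-1\}$, and let $Y_n^>$ be the positive subalgebra of the Yangian of $\mathfrak{sl}_n$ (defined in the context). Let $\mathbf{Y}_n^>$ be the $\mathbb{Z}[\frac12]$-subalgebra of $Y_n^>$ generated by the divided powers $e_{i,r}^t/t!$ for $i\in I$, $r,t\in\mathbb{N}$. Then for every positive root $\beta=[i,j]$ ($1\le i\le j\le n-1$) and all $r,t\in\mathbb{N}$, the divided power $$\mathbf{e}_\beta(r)^{(t)}:=\frac{e_\beta(r)^t}{t!}$$ lies in $\mathbf{Y}_n^>$.
   Context: $\mathbb{N}=\{0,1,2,\dots\}$. $(c_{ij})_{i,j\in I}$ is the Cartan matrix of $\mathfrak{sl}_n$: $c_{ii}=2$, $c_{i,i\pm1}=-1$, $c_{ij}=0$ if $|i-j|>1$. $Y_n^>$ is the associative $\mathbb{C}$-algebra generated by $\{e_{i,r}: i\in I, r\in\mathbb{N}\}$ subject to the relations $[e_{i,r+1},e_{j,s}]-[e_{i,r},e_{j,s+1}]=\frac{c_{ij}}{2}(e_{i,r}e_{j,s}+e_{j,s}e_{i,r})$; $[e_{i,r},e_{j,s}]=0$ if $c_{ij}=0$; $[e_{i,r_1},[e_{i,r_2},e_{j,s}]]+[e_{i,r_2},[e_{i,r_1},e_{j,s}]]=0$ if $c_{ij}=-1$. The positive roots of $\mathfrak{sl}_n$ are $[i,j]:=\alpha_i+\alpha_{i+1}+\dots+\alpha_j$ for $1\le i\le j\le n-1$. For $\beta=[i,j]$ and $r\in\mathbb{N}$, $e_\beta(r):=[\cdots[[e_{i,r},e_{i+1,0}],e_{i+2,0}],\dots,e_{j,0}]$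 (so $e_{[i,i]}(r)=e_{i,r}$). *)

theory Defs
  imports Complex_Main
begin

(* A complex algebra structure on a ring 'a: a unital ring homomorphism phi from C into the centre. *)
definition complex_algebra_hom :: "(complex \<Rightarrow> 'a::ring_1) \<Rightarrow> bool" where
  "complex_algebra_hom \<phi> \<longleftrightarrow>
     (\<forall>a b. \<phi> (a + b) = \<phi> a + \<phi> b) \<and> (\<forall>a b. \<phi> (a * b) = \<phi> a * \<phi> b) \<and>
     \<phi> 1 = 1 \<and> (\<forall>c x. \<phi> c * x = x * \<phi> c)"

definition commut :: "'a::ring \<Rightarrow> 'a \<Rightarrow> 'a" where
  "commut x y = x * y - y * x"

definition cartan :: "nat \<Rightarrow> nat \<Rightarrow> int" where
  "cartan i j = (if i = j then 2 else if i = j + 1 \<or> j = i + 1 then -1 else 0)"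

definition yangian_pos_rels :: "nat \<Rightarrow> (complex \<Rightarrow> 'a::ring_1) \<Rightarrow> (nat \<Rightarrow> nat \<Rightarrow> 'a) \<Rightarrow> bool" where
  "yangian_pos_rels n \<phi> e \<longleftrightarrow>
    (\<forall>i\<in>{1..n-1}. \<forall>j\<in>{1..n-1}. \<forall>r s.
       commut (e i (r+1)) (e j s) - commut (e i r) (e j (s+1))
         = \<phi> (of_int (cartan i j) / 2) * (e i r * e j s + e j s * e i r)) \<and>
    (\<forall>i\<in>{1..n-1}. \<forall>j\<in>{1..n-1}. \<forall>r s.
       cartan i j = 0 \<longrightarrow> commut (e i r) (e j s) = 0) \<and>
    (\<forall>i\<in>{1..n-1}. \<forall>j\<in>{1..n-1}. \<forall>r1 r2 s.
       cartan i j = -1 \<longrightarrow>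
         commut (e i r1) (commut (e i r2) (e j s)) + commut (e i r2) (commut (e i r1) (e j s)) = 0)"

inductive_set zhalf_subalg :: "(complex \<Rightarrow> 'a::ring_1) \<Rightarrow> 'a set \<Rightarrow> 'a set"
  for \<phi> :: "complex \<Rightarrow> 'a" and G :: "'a set" where
  gen: "x \<in> G \<Longrightarrow> x \<in> zhalf_subalg \<phi> G"
| one: "1 \<in> zhalf_subalg \<phi> G"
| add: "x \<in> zhalf_subalg \<phi> G \<Longrightarrow> y \<in> zhalf_subalg \<phi> G \<Longrightarrow> x + y \<in> zhalf_subalg \<phi> G"
| neg: "x \<in> zhalf_subalg \<phi> G \<Longrightarrow> - x \<in> zhalf_subalg \<phi> G"
| mult: "x \<in> zhalf_subalg \<phi> G \<Longrightarrow> y \<in> zhalf_subalg \<phi> G \<Longrightarrow> x * y \<in> zhalf_subalg \<phi> G"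
| half: "x \<in> zhalf_subalg \<phi> G \<Longrightarrow> \<phi> (1/2) * x \<in> zhalf_subalg \<phi> G"

definition divpow :: "(complex \<Rightarrow> 'a::ring_1) \<Rightarrow> 'a \<Rightarrow> nat \<Rightarrow> 'a" where
  "divpow \<phi> x t = \<phi> (1 / of_nat (fact t)) * x ^ t"

fun root_vec :: "(nat \<Rightarrow> nat \<Rightarrow> 'a::ring) \<Rightarrow> nat \<Rightarrow> nat \<Rightarrow> nat \<Rightarrow> 'a" where
  "root_vec e i 0 r = e i r"
| "root_vec e i (Suc k) r = commut (root_vec e i k r) (e (i + Suc k) 0)"

definition e_beta :: "(nat \<Rightarrow> nat \<Rightarrow> 'a::ring) \<Rightarrow> nat \<Rightarrow> nat \<Rightarrow> nat \<Rightarrow> 'a" where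
  "e_beta e i j r = root_vec e i (j - i) r"

end

theory Submission
  imports Defs
begin

text \<open>
  Induction on the height of \<open>\<beta> = [i,j]\<close>. For \<open>j > i\<close> put \<open>x = e_[i,j-1](r)\<close> and
  \<open>y = e_j,0\<close>, so that \<open>e_\<beta>(r) = [x,y]\<close>. Propagating the Serre relations along the root
  string gives \<open>[x,[x,y]] = 0 = [y,[y,x]]\<close>, i.e. \<open>z = [x,y]\<close> commutes with \<open>x\<close> and \<open>y\<close>.
  For such a Heisenberg triple the normal ordering of \<open>x^t y^t\<close> reads, in divided powers,
  \<open>x^(t) y^(t) = \<Sum>k\<le>t. y^(t-k) z^(k) x^(t-k)\<close>. Its term \<open>k = t\<close> is \<open>z^(t)\<close> and the others
  involve only lower divided powers of \<open>z\<close>, so by induction on \<open>t\<close> every \<open>z^(t)\<close> lies in the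
  \<open>\<int>[1/2]\<close>-algebra generated by the divided powers of \<open>x\<close> and \<open>y\<close>.
\<close>

lemma commut_0_left [simp]: "commut 0 (x::'a::ring) = 0"
  unfolding commut_def by simp

lemma commut_0_right [simp]: "commut (x::'a::ring) 0 = 0"
  unfolding commut_def by simp

lemma commut_antisym: "commut (a::'a::ring) b = - commut b a"
  unfolding commut_def by simp

lemma commut_eq_0_iff: "commut x y = 0 \<longleftrightarrow> x * y = y * (x::'a::ring)"
  unfolding commut_def by simp

lemma commut_jacobi:
  "commut (a::'a::ring) (commut b c) = commut (commut a b) c + commut b (commut a c)"
  unfolding commut_def by (simp add: algebra_simps)

lemma commut_commut_eq_0:
  assumes "commut (a::'a::ring) c = 0" and "commut b c = 0"
  shows "commut (commut a b) c = 0"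
  using commut_jacobi[of a b c] assms by simp

lemma commut_commut_commute:
  assumes "commut (y::'a::ring) a = 0"
  shows "commut y (commut y (commut a w)) = commut a (commut y (commut y w))"
  using commut_jacobi[of y a w] commut_jacobi[of y a "commut y w"] assms by simp

lemma commut_ad_square_left:
  "commut (commut b (commut b a)) (c::'a::ring) =
     commut b (commut b (commut a c)) - (commut b (commut a (commut b c)) + commut b (commut a (commut b c)))
     + commut a (commut b (commut b c))"
  unfolding commut_def by (simp add: algebra_simps)

text \<open>The inductive step along the root string, with \<open>a = e_[i,j-1](r)\<close>, \<open>b = e_j,0\<close>, \<open>c = e_j+1,0\<close>.\<close>
lemma serre_commut_left:
  fixes a b c :: "'a::ring"
  assumes two_torsion_free: "\<And>X::'a. X + X = 0 \<Longrightarrow> X = 0"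
    and ac: "commut a c = 0" and aab: "commut a (commut a b) = 0"
    and bba: "commut b (commut b a) = 0" and bbc: "commut b (commut b c) = 0"
  shows "commut (commut a b) (commut (commut a b) c) = 0"
proof -
  define w where "w = commut a (commut b c)"
  have abc: "commut (commut a b) c = w"
    using commut_jacobi[of a b c] ac by (simp add: w_def)
  have aw: "commut a w = 0"
    using commut_jacobi[of a "commut a b" c] abc aab ac by simp
  have "commut b w + commut b w = 0"
    using commut_ad_square_left[of b a c] bba ac bbc by (simp add: w_def neg_eq_iff_add_eq_0)
  then have bw: "commut b w = 0"
    by (rule two_torsion_free)
  have "commut (commut a b) w = commut a (commut b w) - commut b (commut a w)"
    using commut_jacobi[of a b w] by (simp add: algebra_simps)
  then show ?thesis
    using abc aw bw by simp
qed

lemma heisenberg_mult_power: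
  fixes x y z :: "'a::ring_1"
  assumes yz: "y * z = z * y" and xy: "x * y - y * x = z"
  shows "x * y ^ b = y ^ b * x + of_nat b * (y ^ (b - 1) * z)"
proof (induction b)
  case 0
  then show ?case by simp
next
  case (Suc b)
  have "x * y ^ Suc b = (x * y ^ b) * y"
    by (simp only: power_Suc2 mult.assoc)
  also have "\<dots> = y ^ b * (y * x + z) + of_nat b * (y ^ (b - 1) * y * z)"
    using Suc xy yz by (simp add: algebra_simps)
  also have "\<dots> = y ^ Suc b * x + of_nat (Suc b) * (y ^ b * z)"
  proof (cases b)
    case (Suc m)
    then have "y ^ (b - 1) * y = y ^ b"
      by (simp only: diff_Suc_1 power_Suc2)
    moreover have "y ^ b * (y * w) = y ^ Suc b * w" for w
      by (simp only: power_Suc2 mult.assoc)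
    ultimately show ?thesis
      by (simp add: algebra_simps del: power_Suc)
  qed simp
  finally show ?case by simp
qed

definition matchings_count :: "nat \<Rightarrow> nat \<Rightarrow> nat \<Rightarrow> nat" where
  "matchings_count a b k = (a choose k) * (b choose k) * fact k"

lemma matchings_count_0 [simp]: "matchings_count a b 0 = 1"
  by (simp add: matchings_count_def)

lemma matchings_count_Suc:
  "matchings_count (Suc a) b (Suc k) = matchings_count a b (Suc k) + matchings_count a b k * (b - k)"
proof -
  have "(b choose k) * (b - k) = (b choose Suc k) * Suc k"
    by (metis binomial_absorb_comp binomial_absorption mult.commute)
  then show ?thesis
    by (simp add: matchings_count_def algebra_simps)
qed

lemma heisenberg_mult_monomial:
  fixes x y z :: "'a::ring_1"
  assumes xz: "x * z = z * x" and yz: "y * z = z * y" and xy: "x * y - y * x = z"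
  shows "x * (y ^ p * z ^ k * x ^ m) = y ^ p * z ^ k * x ^ Suc m + of_nat p * (y ^ (p - 1) * z ^ Suc k * x ^ m)"
proof -
  have "x * z ^ k = z ^ k * x"
    using xz by (simp add: power_commuting_commutes)
  then show ?thesis
    unfolding mult.assoc[symmetric] heisenberg_mult_power[OF yz xy]
    by (simp add: algebra_simps)
qed

lemma heisenberg_normal_ordering:
  fixes x y z :: "'a::ring_1"
  assumes xz: "x * z = z * x" and yz: "y * z = z * y" and xy: "x * y - y * x = z"
  shows "x ^ a * y ^ b = (\<Sum>k\<le>a. of_nat (matchings_count a b k) * (y ^ (b - k) * z ^ k * x ^ (a - k)))"
proof (induction a)
  case 0
  then show ?case by simp
next
  case (Suc a)
  define c where "c = matchings_count a b"
  define F where "F k = y ^ (b - k) * z ^ k * x ^ (Suc a - k)" for k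
  have "x ^ Suc a * y ^ b = (\<Sum>k\<le>a. of_nat (c k) * (x * (y ^ (b - k) * z ^ k * x ^ (a - k))))"
    unfolding power_Suc mult.assoc Suc c_def sum_distrib_left
    by (intro sum.cong refl) (metis mult.assoc mult_of_nat_commute)
  also have "\<dots> = (\<Sum>k\<le>a. of_nat (c k) * F k) + (\<Sum>k\<le>a. of_nat (c k * (b - k)) * F (Suc k))"
    unfolding sum.distrib[symmetric]
  proof (rule sum.cong)
    fix k assume "k \<in> {..a}"
    then have "x * (y ^ (b - k) * z ^ k * x ^ (a - k)) = F k + of_nat (b - k) * F (Suc k)"
      by (simp add: heisenberg_mult_monomial[OF assms] F_def Suc_diff_le)
    then show "of_nat (c k) * (x * (y ^ (b - k) * z ^ k * x ^ (a - k)))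
        = of_nat (c k) * F k + of_nat (c k * (b - k)) * F (Suc k)"
      by (simp add: distrib_left mult.assoc)
  qed simp
  also have "(\<Sum>k\<le>a. of_nat (c k) * F k) = F 0 + (\<Sum>k\<le>a. of_nat (c (Suc k)) * F (Suc k))"
  proof -
    have "c (Suc a) = 0"
      by (simp add: c_def matchings_count_def)
    then have "(\<Sum>k\<le>a. of_nat (c k) * F k) = (\<Sum>k\<le>Suc a. of_nat (c k) * F k)"
      by simp
    also have "\<dots> = F 0 + (\<Sum>k\<le>a. of_nat (c (Suc k)) * F (Suc k))"
      by (simp only: sum.atMost_Suc_shift) (simp add: c_def)
    finally show ?thesis .
  qed
  also have "F 0 + (\<Sum>k\<le>a. of_nat (c (Suc k)) * F (Suc k))
      + (\<Sum>k\<le>a. of_nat (c k * (b - k)) * F (Suc k))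
    = (\<Sum>k\<le>Suc a. of_nat (matchings_count (Suc a) b k) * F k)"
    by (simp only: sum.atMost_Suc_shift)
      (simp add: c_def matchings_count_Suc sum.distrib distrib_right add.assoc)
  finally show ?case
    by (simp add: F_def)
qed

lemma matchings_count_div_fact_square:
  assumes "k \<le> t"
  shows "1 / of_nat (fact t) * (1 / of_nat (fact t)) * of_nat (matchings_count t t k)
       = 1 / of_nat (fact (t - k)) * (1 / of_nat (fact k)) * (1 / of_nat (fact (t - k)) :: complex)"
proof -
  have "of_nat (fact t) = (of_nat (fact k * fact (t - k) * (t choose k)) :: complex)"
    using binomial_fact_lemma[OF assms] by simp
  moreover have "(of_nat (t choose k) :: complex) \<noteq> 0"
    using assms by simp
  ultimately show ?thesis
    by (simp add: matchings_count_def field_simps)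
qed

lemma zhalf_subalg_diff:
  "a \<in> zhalf_subalg \<phi> G \<Longrightarrow> b \<in> zhalf_subalg \<phi> G \<Longrightarrow> a - b \<in> zhalf_subalg \<phi> G"
  by (metis diff_conv_add_uminus zhalf_subalg.add zhalf_subalg.neg)

lemma zhalf_subalg_sum:
  "finite A \<Longrightarrow> (\<And>k. k \<in> A \<Longrightarrow> f k \<in> zhalf_subalg \<phi> G) \<Longrightarrow> sum f A \<in> zhalf_subalg \<phi> G"
proof (induction A rule: finite_induct)
  case empty
  show ?case
    using zhalf_subalg_diff[OF zhalf_subalg.one zhalf_subalg.one] by simp
qed (simp add: zhalf_subalg.add)

context
  fixes \<phi> :: "complex \<Rightarrow> 'a::ring_1"
  assumes hom: "complex_algebra_hom \<phi>"
begin

lemma phi_add: "\<phi> (a + b) = \<phi> a + \<phi> b"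
  using hom unfolding complex_algebra_hom_def by blast

lemma phi_mult: "\<phi> (a * b) = \<phi> a * \<phi> b"
  using hom unfolding complex_algebra_hom_def by blast

lemma phi_one: "\<phi> 1 = 1"
  using hom unfolding complex_algebra_hom_def by blast

lemma phi_central: "\<phi> c * x = x * \<phi> c"
  using hom unfolding complex_algebra_hom_def by blast

lemma phi_of_nat: "\<phi> (of_nat m) = of_nat m"
proof (induction m)
  case 0
  show ?case using phi_add[of 0 0] by simp
qed (simp add: phi_add phi_one)

lemma add_self_eq_0_imp_eq_0:
  assumes "(X::'a) + X = 0"
  shows "X = 0"
proof -
  have "X = \<phi> (1/2 + 1/2) * X"
    by (simp add: phi_one)
  also have "\<dots> = \<phi> (1/2) * (X + X)"
    by (simp only: phi_add distrib_left distrib_right)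
  finally show ?thesis
    using assms by simp
qed

lemma phi_mult_phi_mult: "\<phi> a * X * (\<phi> b * Y) = \<phi> (a * b) * (X * Y)"
proof -
  have "\<phi> a * X * (\<phi> b * Y) = \<phi> a * (X * \<phi> b) * Y"
    by (simp add: mult.assoc)
  also have "\<dots> = \<phi> a * (\<phi> b * X) * Y"
    by (simp add: phi_central)
  finally show ?thesis
    by (simp add: phi_mult mult.assoc)
qed

lemma divpow_0 [simp]: "divpow \<phi> x 0 = 1"
  by (simp add: divpow_def phi_one)

lemma heisenberg_divpow_product:
  fixes x y z :: 'a
  assumes "x * z = z * x" and "y * z = z * y" and "x * y - y * x = z"
  shows "divpow \<phi> x t * divpow \<phi> y t
       = (\<Sum>k\<le>t. divpow \<phi> y (t - k) * divpow \<phi> z k * divpow \<phi> x (t - k))"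
proof -
  let ?c = "1 / of_nat (fact t) * (1 / of_nat (fact t)) :: complex"
  have "divpow \<phi> x t * divpow \<phi> y t = \<phi> ?c * (x ^ t * y ^ t)"
    unfolding divpow_def by (rule phi_mult_phi_mult)
  also have "\<dots> = (\<Sum>k\<le>t. \<phi> (?c * of_nat (matchings_count t t k)) * (y ^ (t - k) * z ^ k * x ^ (t - k)))"
    unfolding heisenberg_normal_ordering[OF assms] sum_distrib_left
    by (simp only: phi_mult phi_of_nat mult.assoc)
  also have "\<dots> = (\<Sum>k\<le>t. divpow \<phi> y (t - k) * divpow \<phi> z k * divpow \<phi> x (t - k))"
  proof (rule sum.cong)
    fix k assume "k \<in> {..t}"
    then have "k \<le> t" by simp
    show "\<phi> (?c * of_nat (matchings_count t t k)) * (y ^ (t - k) * z ^ k * x ^ (t - k))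
        = divpow \<phi> y (t - k) * divpow \<phi> z k * divpow \<phi> x (t - k)"
      unfolding matchings_count_div_fact_square[OF \<open>k \<le> t\<close>] divpow_def phi_mult_phi_mult
      by (simp only: mult.assoc)
  qed simp
  finally show ?thesis .
qed

lemma heisenberg_divpow_in_zhalf_subalg:
  fixes x y z :: 'a
  assumes "x * z = z * x" and "y * z = z * y" and "x * y - y * x = z"
    and x_mem: "\<And>a. divpow \<phi> x a \<in> zhalf_subalg \<phi> G"
    and y_mem: "\<And>b. divpow \<phi> y b \<in> zhalf_subalg \<phi> G"
  shows "divpow \<phi> z t \<in> zhalf_subalg \<phi> G"
proof (induction t rule: less_induct)
  case (less t)
  have "divpow \<phi> x t * divpow \<phi> y t
      = (\<Sum>k<t. divpow \<phi> y (t - k) * divpow \<phi> z k * divpow \<phi> x (t - k)) + divpow \<phi> z t"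
    unfolding heisenberg_divpow_product[OF assms(1-3)] lessThan_Suc_atMost[symmetric] sum.lessThan_Suc
    by simp
  then have "divpow \<phi> z t = divpow \<phi> x t * divpow \<phi> y t
      - (\<Sum>k<t. divpow \<phi> y (t - k) * divpow \<phi> z k * divpow \<phi> x (t - k))"
    by (simp add: algebra_simps)
  also have "\<dots> \<in> zhalf_subalg \<phi> G"
    using less x_mem y_mem
    by (intro zhalf_subalg_diff zhalf_subalg_sum zhalf_subalg.mult) auto
  finally show ?case .
qed

end

context
  fixes n :: nat and \<phi> :: "complex \<Rightarrow> 'a::ring_1" and e :: "nat \<Rightarrow> nat \<Rightarrow> 'a" and i r :: nat
  assumes hom: "complex_algebra_hom \<phi>"
    and rels: "yangian_pos_rels n \<phi> e"
    and i_ge_1: "1 \<le> i"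
begin

lemma serre_rel:
  assumes "a \<in> {1..n-1}" and "b \<in> {1..n-1}" and "cartan a b = -1"
  shows "commut (e a p) (commut (e a p) (e b q)) = 0"
  using rels assms add_self_eq_0_imp_eq_0[OF hom] unfolding yangian_pos_rels_def by blast

lemma commut_far_generators:
  assumes "a \<in> {1..n-1}" and "b \<in> {1..n-1}" and "cartan a b = 0"
  shows "commut (e a p) (e b q) = 0"
  using rels assms unfolding yangian_pos_rels_def by blast

lemma commut_root_vec_far_generator:
  "i + k + 2 \<le> m \<Longrightarrow> m \<le> n - 1 \<Longrightarrow> commut (root_vec e i k r) (e m s) = 0"
proof (induction k)
  case 0
  then show ?case
    using commut_far_generators[of i m r s] i_ge_1 by (simp add: cartan_def)
next
  case (Suc k)
  then show ?case
    using commut_commut_eq_0 commut_far_generators[of "i + Suc k" m 0 s] i_ge_1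
    by (simp add: cartan_def)
qed

lemma serre_generator_root_vec:
  "i + k + 1 \<le> n - 1 \<Longrightarrow> commut (e (i + k + 1) 0) (commut (e (i + k + 1) 0) (root_vec e i k r)) = 0"
proof (induction k)
  case 0
  then show ?case
    using serre_rel[of "i + 1" i 0 r] i_ge_1 by (simp add: cartan_def)
next
  case (Suc k)
  have far: "commut (e (i + Suc k + 1) 0) (root_vec e i k r) = 0"
    using commut_root_vec_far_generator[of k "i + Suc k + 1" 0] Suc.prems
    by (subst commut_antisym) simp
  have "commut (e (i + Suc k + 1) 0) (commut (e (i + Suc k + 1) 0) (e (i + Suc k) 0)) = 0"
    using serre_rel[of "i + Suc k + 1" "i + Suc k" 0 0] Suc.prems i_ge_1 by (simp add: cartan_def)
  then show ?case
    using commut_commut_commute[OF far, of "e (i + Suc k) 0"] by simp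
qed

lemma serre_root_vec_generator:
  "i + k + 1 \<le> n - 1 \<Longrightarrow> commut (root_vec e i k r) (commut (root_vec e i k r) (e (i + k + 1) 0)) = 0"
proof (induction k)
  case 0
  then show ?case
    using serre_rel[of i "i + 1" r 0] i_ge_1 by (simp add: cartan_def)
next
  case (Suc k)
  have "commut (commut (root_vec e i k r) (e (i + k + 1) 0))
          (commut (commut (root_vec e i k r) (e (i + k + 1) 0)) (e (i + k + 2) 0)) = 0"
  proof (rule serre_commut_left[OF add_self_eq_0_imp_eq_0[OF hom]])
    show "commut (root_vec e i k r) (e (i + k + 2) 0) = 0"
      using commut_root_vec_far_generator[of k "i + k + 2" 0] Suc.prems by simp
    show "commut (root_vec e i k r) (commut (root_vec e i k r) (e (i + k + 1) 0)) = 0"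
      using Suc by simp
    show "commut (e (i + k + 1) 0) (commut (e (i + k + 1) 0) (root_vec e i k r)) = 0"
      using serre_generator_root_vec[of k] Suc.prems by simp
    show "commut (e (i + k + 1) 0) (commut (e (i + k + 1) 0) (e (i + k + 2) 0)) = 0"
      using serre_rel[of "i + k + 1" "i + k + 2" 0 0] Suc.prems i_ge_1 by (simp add: cartan_def)
  qed
  then show ?case
    by (simp add: add.commute add.left_commute)
qed

lemma divpow_root_vec_in_zhalf_subalg:
  "i + k \<le> n - 1 \<Longrightarrow>
    divpow \<phi> (root_vec e i k r) t \<in> zhalf_subalg \<phi> {divpow \<phi> (e m s) u | m s u. m \<in> {1..n-1}}"
proof (induction k arbitrary: t)
  case 0
  then show ?case
    using i_ge_1 by (auto intro: zhalf_subalg.gen)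
next
  case (Suc k)
  define x where "x = root_vec e i k r"
  define y where "y = e (i + k + 1) 0"
  have "commut x (commut x y) = 0"
    using serre_root_vec_generator[of k] Suc.prems by (simp add: x_def y_def)
  then have xz: "x * commut x y = commut x y * x"
    by (simp add: commut_eq_0_iff)
  have "commut y (commut y x) = 0"
    using serre_generator_root_vec[of k] Suc.prems by (simp add: x_def y_def)
  then have yz: "y * commut x y = commut x y * y"
    unfolding commut_def by (simp add: algebra_simps)
  have xy: "x * y - y * x = commut x y"
    by (simp add: commut_def)
  have "divpow \<phi> y b \<in> zhalf_subalg \<phi> {divpow \<phi> (e m s) u | m s u. m \<in> {1..n-1}}" for b
    using Suc.prems i_ge_1 by (auto simp: y_def intro: zhalf_subalg.gen)
  then have "divpow \<phi> (commut x y) t \<in> zhalf_subalg \<phi> {divpow \<phi> (e m s) u | m s u. m \<in> {1..n-1}}"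
    using heisenberg_divpow_in_zhalf_subalg[OF hom xz yz xy] Suc by (simp add: x_def)
  then show ?case
    by (simp add: x_def y_def)
qed

end

theorem proposition2p7:
  fixes n :: nat and \<phi> :: "complex \<Rightarrow> 'a::ring_1" and e :: "nat \<Rightarrow> nat \<Rightarrow> 'a"
  assumes "n \<ge> 2"
    and "complex_algebra_hom \<phi>"
    and "yangian_pos_rels n \<phi> e"
    and "1 \<le> i" and "i \<le> j" and "j \<le> n - 1"
  shows "divpow \<phi> (e_beta e i j r) t
           \<in> zhalf_subalg \<phi> {divpow \<phi> (e k s) u | k s u. k \<in> {1..n-1}}"
  using divpow_root_vec_in_zhalf_subalg[OF assms(2-4), of "j - i" r t] assms(5,6)
  by (simp add: e_beta_def)

end
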